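(* Let $F(z)=\sum_{q=0}^{\infty}a_qz^q$ be holomorphic in a neighborhood of the origin with $a_0\neq 0$, and let $X\in\mathbb{C}$. Define the coefficients $c_p^{(X)}$ by $$\sum_{p=0}^{\infty}c_p^{(X)}z^p=F(z)^X .$$ Then for every integer $p\ge 0$ the following two expressions hold: (I) $$c_p^{(X)}=\sum_{0\le k_1,\dots,k_p\le p}\binom{X}{K}\frac{K!}{k_1!\cdots k_p!}\,\delta_{p,\sum_{m=1}^p mk_m}\;a_0^{X-K}a_1^{k_1}\cdots a_p^{k_p},\qquad K=k_1+\cdots+k_p ;$$ (II) $$c_p^{(X)}=\big(a_0^{X}\big)^{p+1}\,\det\!\big(M^{-X}+E\big),$$ where $M$ is the $(p+1)\times(p+1)$ lower-triangular Toeplitz matrix with entries $M_{ij}=a_{i-j}$ for $0\le j\le i\le p$ and $M_{ij}=0$ for $j>i$, and $E$ is the $(p+1)\times(p+1)$ matrix whose only nonzero column is its last column, equal to $(1,0,\dots,0,-1/a_0^X)^T$ (i.e. $e_0-a_0^{-X}e_p$).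
   Context: Powers with complex exponent: fix $\lambda\in\mathbb{C}$ with $e^\lambda=a_0$, set $a_0^{Y}=e^{Y\lambda}$ for $Y\in\mathbb{C}$ (so $a_0^{X-K}=a_0^Xa_0^{-K}$), and define $F(z)^X=\exp(X\log F(z))$ where $\log F$ is the holomorphic logarithm near $0$ with $\log F(0)=\lambda$. The generalized binomial coefficient is $\binom{X}{N}=X(X-1)\cdots(X-N+1)/N!$, and $\delta$ is the Kronecker delta. For a $(p+1)\times(p+1)$ lower-triangular Toeplitz matrix $M$ with diagonal entry $a_0\neq0$ and $Y\in\mathbb{C}$, $M^{Y}$ denotes $a_0^{Y}\sum_{n=0}^{p}\binom{Y}{n}(a_0^{-1}M-I)^n$ (a finite sum, since $a_0^{-1}M-I$ is nilpotent). For $p=0$ the sum in (I) is over the empty tuple and equals $a_0^X$. *)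

theory Defs
  imports "HOL-Complex_Analysis.Complex_Analysis" "Jordan_Normal_Form.Determinant"
begin

definition taylor_coeff :: "(complex \<Rightarrow> complex) \<Rightarrow> nat \<Rightarrow> complex" where
  "taylor_coeff f q = (deriv ^^ q) f 0 / of_nat (fact q)"

(* complex power a0^Y := exp (Y * lam), where lam is the fixed logarithm of a0 *)
definition cpow :: "complex \<Rightarrow> complex \<Rightarrow> complex" where
  "cpow lam Y = exp (Y * lam)"

definition toeplitz_lt :: "(nat \<Rightarrow> complex) \<Rightarrow> nat \<Rightarrow> complex mat" where
  "toeplitz_lt a p = mat (p+1) (p+1) (\<lambda>(i,j). if j \<le> i then a (i - j) else 0)"

definition toeplitz_pow :: "complex \<Rightarrow> complex mat \<Rightarrow> complex \<Rightarrow> complex mat" where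
  "toeplitz_pow lam M Y =
     (let n = dim_row M; N = (inverse (cpow lam 1)) \<cdot>\<^sub>m M - 1\<^sub>m n in
      mat n n (\<lambda>(i,j). cpow lam Y * (\<Sum>k<n. (Y gchoose k) * (N ^\<^sub>m k) $$ (i,j))))"

definition E_mat :: "complex \<Rightarrow> complex \<Rightarrow> nat \<Rightarrow> complex mat" where
  "E_mat lam X p = mat (p+1) (p+1) (\<lambda>(i,j). if j = p then
       (if i = 0 then 1 else 0) - (if i = p then 1 / cpow lam X else 0) else 0)"

end

theory Submission
  imports Defs
begin

text \<open>
  Let \<open>A\<close> be the Taylor series of \<open>F\<close> at 0 and \<open>a\<^sub>0 = A\<^sub>0\<close>. The series
  \<open>a\<^sub>0\<^sup>X (1 + B)\<^sup>X\<close>, with \<open>B = A / a\<^sub>0 - 1\<close> and \<open>(1 + w)\<^sup>X\<close> the binomial series, satisfies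
  the same linear differential equation \<open>A C' = X A' C\<close> as the Taylor series \<open>C\<close> of
  \<open>F\<^sup>X = exp (X log F)\<close>, and has the same constant term \<open>a\<^sub>0\<^sup>X\<close>; so the two coincide.
  Expanding the powers \<open>B\<^sup>K\<close> by the multinomial theorem gives (I).

  For (II), lower triangular Toeplitz matrices of size \<open>p + 1\<close> multiply like power series
  modulo \<open>z\<^sup>p\<^sup>+\<^sup>1\<close>. Hence \<open>M\<^sup>-\<^sup>X\<close> is the Toeplitz matrix of the reciprocal series \<open>C\<^sup>-\<^sup>1\<close>,
  and multiplying \<open>M\<^sup>-\<^sup>X + E\<close> on the left by the Toeplitz matrix of \<open>C\<close>, whose determinant
  is \<open>(a\<^sub>0\<^sup>X)\<^sup>p\<^sup>+\<^sup>1\<close>, produces the identity matrix with last column \<open>(c\<^sub>0, \<dots>, c\<^sub>p)\<close>,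
  whose determinant is \<open>c\<^sub>p\<close>.
\<close>

section \<open>Lower triangular Toeplitz matrices of power series\<close>

definition fps_toeplitz :: "nat \<Rightarrow> 'a::zero fps \<Rightarrow> 'a mat" where
  "fps_toeplitz n f = mat n n (\<lambda>(i, j). if j \<le> i then fps_nth f (i - j) else 0)"

lemma fps_toeplitz_carrier [simp]: "fps_toeplitz n f \<in> carrier_mat n n"
  and dim_row_fps_toeplitz [simp]: "dim_row (fps_toeplitz n f) = n"
  and dim_col_fps_toeplitz [simp]: "dim_col (fps_toeplitz n f) = n"
  by (auto simp: fps_toeplitz_def)

lemma index_fps_toeplitz [simp]:
  "i < n \<Longrightarrow> j < n \<Longrightarrow> fps_toeplitz n f $$ (i, j) = (if j \<le> i then fps_nth f (i - j) else 0)"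
  by (simp add: fps_toeplitz_def)

lemma toeplitz_lt_eq_fps_toeplitz: "toeplitz_lt a p = fps_toeplitz (Suc p) (Abs_fps a)"
  by (rule eq_matI) (auto simp: toeplitz_lt_def)

lemma fps_toeplitz_mult:
  fixes f g :: "'a::semiring_1 fps"
  shows "fps_toeplitz n f * fps_toeplitz n g = fps_toeplitz n (f * g)"
proof (rule eq_matI)
  fix i j assume "i < dim_row (fps_toeplitz n (f * g))" "j < dim_col (fps_toeplitz n (f * g))"
  hence i: "i < n" and j: "j < n" by auto
  have "(fps_toeplitz n f * fps_toeplitz n g) $$ (i, j) =
      (\<Sum>k<n. (if k \<le> i then fps_nth f (i - k) else 0) * (if j \<le> k then fps_nth g (k - j) else 0))"
    using i j by (simp add: scalar_prod_def lessThan_atLeast0)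
  also have "\<dots> = (if j \<le> i then fps_nth (f * g) (i - j) else 0)"
  proof (cases "j \<le> i")
    case True
    have "(\<Sum>k<n. (if k \<le> i then fps_nth f (i - k) else 0) * (if j \<le> k then fps_nth g (k - j) else 0))
        = (\<Sum>k\<in>{j..i}. fps_nth f (i - k) * fps_nth g (k - j))"
      using i by (intro sum.mono_neutral_cong_right) auto
    also have "\<dots> = (\<Sum>t\<in>{0..i - j}. fps_nth f t * fps_nth g (i - j - t))"
      by (rule sum.reindex_bij_witness[of _ "\<lambda>t. i - t" "\<lambda>k. i - k"]) (use True in auto)
    finally show ?thesis
      using True by (simp add: fps_mult_nth)
  qed (auto intro!: sum.neutral)
  finally show "(fps_toeplitz n f * fps_toeplitz n g) $$ (i, j) = fps_toeplitz n (f * g) $$ (i, j)"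
    using i j by simp
qed auto

lemma fps_toeplitz_one: "fps_toeplitz n 1 = 1\<^sub>m n"
  by (rule eq_matI) auto

lemma fps_toeplitz_power:
  fixes f :: "'a::semiring_1 fps"
  shows "fps_toeplitz n f ^\<^sub>m k = fps_toeplitz n (f ^ k)"
  by (induction k) (simp_all add: fps_toeplitz_one fps_toeplitz_mult power_commutes)

lemma det_fps_toeplitz:
  fixes f :: "'a::comm_ring_1 fps"
  shows "det (fps_toeplitz n f) = (fps_nth f 0) ^ n"
  using det_lower_triangular[of n "fps_toeplitz n f"] by (simp add: prod_list_diag_prod)

section \<open>Complex powers of a power series\<close>

lemma fps_ode_unique:
  fixes A C D :: "'a::field_char_0 fps"
  assumes A0: "fps_nth A 0 \<noteq> 0" and D0: "fps_nth D 0 \<noteq> 0" and CD0: "fps_nth C 0 = fps_nth D 0"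
    and odeC: "A * fps_deriv C = fps_const c * fps_deriv A * C"
    and odeD: "A * fps_deriv D = fps_const c * fps_deriv A * D"
  shows "C = D"
proof -
  have "A * (fps_deriv C * D - C * fps_deriv D) = (A * fps_deriv C) * D - (A * fps_deriv D) * C"
    by (simp add: algebra_simps)
  also have "\<dots> = 0"
    by (simp add: odeC odeD algebra_simps)
  finally have wronskian: "fps_deriv C * D - C * fps_deriv D = 0"
    using A0 by (auto simp: fps_nonzero_nth)
  have DD: "D * inverse D = 1"
    using D0 by (rule inverse_mult_eq_1')
  have "fps_deriv (C * inverse D) = fps_deriv C * inverse D - C * fps_deriv D * (inverse D)\<^sup>2"
    using D0 by (simp add: fps_inverse_deriv algebra_simps)
  also have "\<dots> = (fps_deriv C * D - C * fps_deriv D) * (inverse D)\<^sup>2"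
  proof -
    have "fps_deriv C * inverse D = fps_deriv C * (D * inverse D) * inverse D"
      by (simp add: DD)
    thus ?thesis
      by (simp add: power2_eq_square algebra_simps)
  qed
  finally have "fps_deriv (C * inverse D) = 0"
    by (simp add: wronskian)
  hence "C * inverse D = fps_const (fps_nth (C * inverse D) 0)"
    by (rule fps_deriv_eq_0_iff[THEN iffD1])
  also have "fps_nth (C * inverse D) 0 = 1"
    using D0 CD0 by (simp add: fps_mult_nth)
  finally have "C * inverse D = 1"
    by simp
  hence "C * inverse D * D = D"
    by simp
  thus ?thesis
    using DD by (simp add: mult.assoc mult.commute[of "inverse D"])
qed

lemma fps_binomial_ode:
  fixes c :: "'a::field_char_0"
  shows "(1 + fps_X) * fps_deriv (fps_binomial c) = fps_const c * fps_binomial c"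
proof -
  have u: "fps_nth (1 + fps_X :: 'a fps) 0 \<noteq> 0"
    by simp
  have "fps_deriv (fps_binomial c) = fps_const c * fps_binomial c * inverse (1 + fps_X)"
    using fps_binomial_deriv[of c] fps_divide_unit[OF u] by simp
  thus ?thesis
    using inverse_mult_eq_1'[OF u] by (simp add: mult_ac)
qed

lemma fps_binomial_compose_ode:
  fixes A :: "'a::field_char_0 fps" and c :: 'a
  defines "D \<equiv> fps_binomial c oo (fps_const (inverse (fps_nth A 0)) * A - 1)"
  assumes A0: "fps_nth A 0 \<noteq> 0"
  shows "A * fps_deriv D = fps_const c * fps_deriv A * D"
proof -
  define B where "B = fps_const (inverse (fps_nth A 0)) * A - 1"
  have B0: "fps_nth B 0 = 0"
    using A0 by (simp add: B_def)
  have A_eq: "A = fps_const (fps_nth A 0) * (1 + B)"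
    using A0 by (simp add: B_def mult.assoc[symmetric])
  have "((1 + fps_X) * fps_deriv (fps_binomial c)) oo B = (fps_const c * fps_binomial c) oo B"
    by (simp only: fps_binomial_ode)
  hence binomial_B: "(1 + B) * (fps_deriv (fps_binomial c) oo B) = fps_const c * D"
    using B0 by (simp add: fps_compose_mult_distrib fps_compose_add_distrib D_def B_def)
  have "A * fps_deriv D = fps_const (fps_nth A 0) * (1 + B) * fps_deriv D"
    using A_eq by (rule arg_cong[where f = "\<lambda>x. x * fps_deriv D"])
  also have "\<dots> = ((1 + B) * (fps_deriv (fps_binomial c) oo B)) * (fps_const (fps_nth A 0) * fps_deriv B)"
    using B0 by (simp add: D_def B_def fps_compose_deriv mult_ac)
  also have "fps_const (fps_nth A 0) * fps_deriv B = fps_deriv A"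
    using A0 by (simp add: B_def mult.assoc[symmetric])
  finally show ?thesis
    by (simp add: binomial_B mult_ac)
qed

lemma exp_mult_log_ode:
  fixes F L :: "complex \<Rightarrow> complex"
  assumes S: "open S" "z \<in> S" and HL: "L holomorphic_on S"
    and FL: "\<And>z. z \<in> S \<Longrightarrow> exp (L z) = F z"
  shows "F z * deriv (\<lambda>z. exp (X * L z)) z = X * deriv F z * exp (X * L z)"
proof -
  have dL: "(L has_field_derivative deriv L z) (at z)"
    using holomorphic_derivI[OF HL S] .
  have "((\<lambda>z. exp (X * L z)) has_field_derivative exp (X * L z) * (X * deriv L z)) (at z)"
    using dL by (auto intro!: derivative_eq_intros)
  moreover have "((\<lambda>z. exp (L z)) has_field_derivative exp (L z) * deriv L z) (at z)"
    using dL by (auto intro!: derivative_eq_intros)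
  hence "(F has_field_derivative exp (L z) * deriv L z) (at z)"
    by (rule has_field_derivative_transform_within_open[OF _ S]) (simp add: FL)
  ultimately show ?thesis
    using FL[OF S(2)] by (simp add: DERIV_imp_deriv mult_ac)
qed

definition fps_cpow :: "complex \<Rightarrow> complex fps \<Rightarrow> complex \<Rightarrow> complex fps" where
  "fps_cpow lam A Y = fps_const (cpow lam Y) * (fps_binomial Y oo (fps_const (inverse (fps_nth A 0)) * A - 1))"

lemma fps_nth_fps_cpow_0 [simp]: "fps_nth (fps_cpow lam A Y) 0 = cpow lam Y"
  by (simp add: fps_cpow_def)

lemma fps_cpow_0 [simp]: "fps_cpow lam A 0 = 1"
  by (simp add: fps_cpow_def cpow_def)

lemma fps_cpow_add:
  assumes "fps_nth A 0 \<noteq> 0"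
  shows "fps_cpow lam A X * fps_cpow lam A Y = fps_cpow lam A (X + Y)"
proof -
  define B where "B = fps_const (inverse (fps_nth A 0)) * A - 1"
  have B0: "fps_nth B 0 = 0"
    using assms by (simp add: B_def)
  have "fps_cpow lam A X * fps_cpow lam A Y =
      fps_const (cpow lam X * cpow lam Y) * ((fps_binomial X oo B) * (fps_binomial Y oo B))"
    by (simp add: fps_cpow_def B_def mult_ac)
  also have "(fps_binomial X oo B) * (fps_binomial Y oo B) = fps_binomial (X + Y) oo B"
    by (simp add: fps_compose_mult_distrib[OF B0, symmetric] fps_binomial_add_mult)
  finally show ?thesis
    by (simp add: fps_cpow_def B_def cpow_def distrib_right exp_add)
qed

text \<open>Both series satisfy \<open>A C' = X A' C\<close>, where \<open>A\<close> is the Taylor series of \<open>F\<close>.\<close>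

lemma has_fps_expansion_exp_mult_log:
  fixes F L :: "complex \<Rightarrow> complex"
  assumes S: "open S" "0 \<in> S" and HF: "F holomorphic_on S" and HL: "L holomorphic_on S"
    and FL: "\<And>z. z \<in> S \<Longrightarrow> exp (L z) = F z"
  shows "(\<lambda>z. exp (X * L z)) has_fps_expansion fps_cpow (L 0) (fps_expansion F 0) X"
proof -
  define A where "A = fps_expansion F 0"
  define G where "G = (\<lambda>z. exp (X * L z))"
  define C where "C = fps_expansion G 0"
  have A0: "fps_nth A 0 = F 0" and F0: "F 0 \<noteq> 0"
    using FL[OF S(2)] by (auto simp: A_def fps_expansion_def)
  have expF: "F has_fps_expansion A"
    unfolding A_def using S HF by blast
  have expG: "G has_fps_expansion C"
    unfolding C_def G_def using S HL by (intro has_fps_expansion_fps_expansion holomorphic_intros)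
  have ode: "eventually (\<lambda>z. F z * deriv G z = X * deriv F z * G z) (nhds 0)"
    using eventually_nhds_in_open[OF S] unfolding G_def
    by eventually_elim (rule exp_mult_log_ode[OF S(1) _ HL FL])
  have "(\<lambda>z. F z * deriv G z) has_fps_expansion A * fps_deriv C"
    using expF expG by (intro has_fps_expansion_mult has_fps_expansion_deriv)
  hence "(\<lambda>z. X * deriv F z * G z) has_fps_expansion A * fps_deriv C"
    using has_fps_expansion_cong[OF ode refl] by blast
  moreover have "(\<lambda>z. X * deriv F z * G z) has_fps_expansion fps_const X * fps_deriv A * C"
    using expF expG by (intro has_fps_expansion_mult has_fps_expansion_deriv has_fps_expansion_cmult_left)
  ultimately have odeC: "A * fps_deriv C = fps_const X * fps_deriv A * C"
    by (rule fps_expansion_unique_complex)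
  define E where "E = fps_binomial X oo (fps_const (inverse (fps_nth A 0)) * A - 1)"
  have "A * fps_deriv (fps_const (cpow (L 0) X) * E) = fps_const (cpow (L 0) X) * (A * fps_deriv E)"
    by (simp only: fps_deriv_mult_const_left mult.left_commute)
  also have "A * fps_deriv E = fps_const X * fps_deriv A * E"
    unfolding E_def using A0 F0 by (intro fps_binomial_compose_ode) simp
  finally have odeE: "A * fps_deriv (fps_const (cpow (L 0) X) * E) =
      fps_const X * fps_deriv A * (fps_const (cpow (L 0) X) * E)"
    by (simp only: mult_ac)
  have "fps_nth C 0 = cpow (L 0) X"
    by (simp add: C_def G_def fps_expansion_def cpow_def mult.commute)
  hence "C = fps_const (cpow (L 0) X) * E"
    by (intro fps_ode_unique[OF _ _ _ odeC odeE]) (simp_all add: A0 F0 E_def cpow_def)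
  thus ?thesis
    using expG by (simp add: G_def E_def fps_cpow_def A_def)
qed

section \<open>The multinomial expansion of the coefficients\<close>

lemma fps_power_add_div_fact:
  fixes u v :: "'a::field_char_0 fps"
  shows "fps_const (1 / fact K) * (u + v) ^ K =
    (\<Sum>j\<in>{0..K}. (fps_const (1 / fact j) * u ^ j) * (fps_const (1 / fact (K - j)) * v ^ (K - j)))"
  unfolding binomial_ring sum_distrib_left atLeast0AtMost
proof (rule sum.cong)
  fix j assume "j \<in> {..K}"
  hence "(1 / fact K) * (of_nat (K choose j) :: 'a) = (1 / fact j) * (1 / fact (K - j))"
    using binomial_fact[of j K] by (simp add: field_simps)
  hence "fps_const (1 / fact K) * of_nat (K choose j) = fps_const (1 / fact j) * (fps_const (1 / fact (K - j)) :: 'a fps)"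
    by (metis fps_const_mult fps_of_nat)
  thus "fps_const (1 / fact K) * (of_nat (K choose j) * u ^ j * v ^ (K - j)) =
      (fps_const (1 / fact j) * u ^ j) * (fps_const (1 / fact (K - j)) * v ^ (K - j))"
    by (metis (no_types, lifting) mult.assoc mult.left_commute)
qed simp

lemma fps_power_sum_multinomial:
  fixes x :: "'i \<Rightarrow> 'a::field_char_0 fps"
  assumes "finite I" and "K \<le> N"
  shows "fps_const (1 / fact K) * (\<Sum>i\<in>I. x i) ^ K =
    (\<Sum>k\<in>{k \<in> PiE I (\<lambda>_. {0..N}). sum k I = K}. \<Prod>i\<in>I. fps_const (1 / fact (k i)) * x i ^ k i)"
  using assms
proof (induction I arbitrary: K rule: finite_induct)
  case empty
  show ?case
  proof (cases "K = 0")
    case True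
    hence "{k \<in> PiE {} (\<lambda>_. {0..N}). sum k {} = K} = {\<lambda>_. undefined}"
      by auto
    thus ?thesis
      using True by simp
  next
    case False
    hence "{k \<in> PiE {} (\<lambda>_. {0..N}). sum k {} = K} = {}"
      by auto
    thus ?thesis
      using False by simp
  qed
next
  case (insert a I)
  define g where "g = (\<lambda>i j. fps_const (1 / fact j) * x i ^ j)"
  define S where "S = (\<lambda>(J :: 'i set) L. {k \<in> PiE J (\<lambda>_. {0..N}). sum k J = L})"
  have finS: "finite (S I L)" for L
    by (rule finite_subset[of _ "PiE I (\<lambda>_. {0..N})"]) (auto simp: S_def insert.hyps intro!: finite_PiE)
  have "fps_const (1 / fact K) * (\<Sum>i\<in>insert a I. x i) ^ K
      = (\<Sum>j\<in>{0..K}. g a j * (fps_const (1 / fact (K - j)) * (\<Sum>i\<in>I. x i) ^ (K - j)))"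
    using insert.hyps by (simp add: fps_power_add_div_fact g_def)
  also have "\<dots> = (\<Sum>j\<in>{0..K}. g a j * (\<Sum>k\<in>S I (K - j). \<Prod>i\<in>I. g i (k i)))"
    using insert.IH insert.prems by (intro sum.cong refl) (simp add: g_def S_def)
  also have "\<dots> = (\<Sum>(j, k)\<in>Sigma {0..K} (\<lambda>j. S I (K - j)). g a j * (\<Prod>i\<in>I. g i (k i)))"
    unfolding sum_distrib_left by (rule sum.Sigma) (auto simp: finS)
  also have "\<dots> = (\<Sum>k\<in>S (insert a I) K. \<Prod>i\<in>insert a I. g i (k i))"
  proof (rule sum.reindex_bij_witness[where j = "\<lambda>(j, k). k(a := j)" and i = "\<lambda>k. (k a, k(a := undefined))"])
    fix jk assume jk: "jk \<in> Sigma {0..K} (\<lambda>j. S I (K - j))"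
    obtain j k where e: "jk = (j, k)"
      by fastforce
    have j: "j \<le> K" and k: "k \<in> PiE I (\<lambda>_. {0..N})" and sk: "sum k I = K - j"
      using jk by (auto simp: e S_def)
    have ka: "k a = undefined"
      using k insert.hyps by (auto simp: PiE_def extensional_def)
    show "(case (case jk of (j, k) \<Rightarrow> k(a := j)) of k \<Rightarrow> (k a, k(a := undefined))) = jk"
      using ka by (auto simp: e fun_eq_iff)
    have "sum (k(a := j)) I = sum k I"
      using insert.hyps by (intro sum.cong) auto
    thus "(case jk of (j, k) \<Rightarrow> k(a := j)) \<in> S (insert a I) K"
      using k j sk insert.hyps insert.prems by (auto simp: e S_def PiE_iff)
    have "(\<Prod>i\<in>I. g i ((k(a := j)) i)) = (\<Prod>i\<in>I. g i (k i))"
      using insert.hyps by (intro prod.cong) auto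
    thus "(\<Prod>i\<in>insert a I. g i ((case jk of (j, k) \<Rightarrow> k(a := j)) i)) =
          (case jk of (j, k) \<Rightarrow> g a j * (\<Prod>i\<in>I. g i (k i)))"
      using insert.hyps by (simp add: e)
  next
    fix k assume k: "k \<in> S (insert a I) K"
    show "(case (k a, k(a := undefined)) of (j, k) \<Rightarrow> k(a := j)) = k"
      by simp
    have kk: "k \<in> PiE (insert a I) (\<lambda>_. {0..N})" and "sum k (insert a I) = K"
      using k by (auto simp: S_def)
    hence "k a + sum k I = K"
      using insert.hyps by simp
    moreover have "sum (k(a := undefined)) I = sum k I"
      using insert.hyps by (intro sum.cong) auto
    ultimately show "(k a, k(a := undefined)) \<in> Sigma {0..K} (\<lambda>j. S I (K - j))"
      using kk insert.hyps by (auto simp: S_def PiE_iff extensional_def)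
  qed
  finally show ?case
    by (simp add: S_def g_def)
qed

lemma fps_nth_power_cong:
  fixes f g :: "'a::semiring_1 fps"
  assumes "\<And>i. i \<le> n \<Longrightarrow> fps_nth f i = fps_nth g i" and "i \<le> n"
  shows "fps_nth (f ^ K) i = fps_nth (g ^ K) i"
  using assms(2)
proof (induction K arbitrary: i)
  case (Suc K)
  thus ?case
    using assms(1) by (auto simp: fps_mult_nth intro!: sum.cong)
qed simp

lemma prod_fps_const_monomial_power:
  "(\<Prod>m\<in>I. fps_const (c m) * (fps_const (b m) * fps_X ^ m) ^ (k m)) =
     fps_const (\<Prod>m\<in>I. c m * b m ^ k m) * (fps_X :: 'a::comm_semiring_1 fps) ^ (\<Sum>m\<in>I. m * k m)"
proof (induction I rule: infinite_finite_induct)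
  case (insert x I)
  have "fps_const (c x) * (fps_const (b x) * fps_X ^ x) ^ k x =
        fps_const (c x * b x ^ k x) * (fps_X :: 'a fps) ^ (x * k x)"
    by (simp add: power_mult_distrib power_mult[symmetric] mult.assoc[symmetric] fps_const_power)
  thus ?case
    using insert by (simp add: power_add mult_ac)
qed simp_all

lemma fps_nth_power_multinomial:
  fixes B :: "'a::field_char_0 fps"
  assumes B0: "fps_nth B 0 = 0" and "K \<le> p"
  shows "fps_nth (B ^ K) p = fact K * (\<Sum>k\<in>{k \<in> PiE {1..p} (\<lambda>_. {0..p}). sum k {1..p} = K}.
           if (\<Sum>m\<in>{1..p}. m * k m) = p then (\<Prod>m\<in>{1..p}. fps_nth B m ^ k m / fact (k m)) else 0)"
proof -
  define Bp where "Bp = (\<Sum>m\<in>{1..p}. fps_const (fps_nth B m) * fps_X ^ m)"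
  have Bp: "fps_nth B i = fps_nth Bp i" if "i \<le> p" for i
  proof -
    have "fps_nth Bp i = (\<Sum>m\<in>{1..p}. if m = i then fps_nth B m else 0)"
      unfolding Bp_def fps_sum_nth by (intro sum.cong) auto
    thus ?thesis
      using that B0 by (cases "i = 0") auto
  qed
  have monomial_nth: "fps_nth (fps_const c * fps_X ^ s) p = (if s = p then c else 0)" for c :: 'a and s
    by (simp add: fps_X_power_mult_right_nth)
  from Bp have "fps_nth (B ^ K) p = fps_nth (Bp ^ K) p"
    by (metis fps_nth_power_cong order.refl)
  also have "\<dots> = fact K * fps_nth (fps_const (1 / fact K) * Bp ^ K) p"
    by simp
  also have "fps_const (1 / fact K) * Bp ^ K = (\<Sum>k\<in>{k \<in> PiE {1..p} (\<lambda>_. {0..p}). sum k {1..p} = K}.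
        fps_const (\<Prod>m\<in>{1..p}. fps_nth B m ^ k m / fact (k m)) * fps_X ^ (\<Sum>m\<in>{1..p}. m * k m))"
    unfolding Bp_def using \<open>K \<le> p\<close>
    by (simp add: fps_power_sum_multinomial prod_fps_const_monomial_power)
  finally show ?thesis
    by (simp only: fps_sum_nth monomial_nth)
qed

lemma fps_nth_compose_multinomial:
  fixes f B :: "'a::field_char_0 fps"
  assumes B0: "fps_nth B 0 = 0"
  shows "fps_nth (f oo B) p = (\<Sum>k\<in>PiE {1..p} (\<lambda>_. {0..p}).
           if (\<Sum>m\<in>{1..p}. m * k m) = p
           then fps_nth f (sum k {1..p}) * fact (sum k {1..p}) * (\<Prod>m\<in>{1..p}. fps_nth B m ^ k m / fact (k m))
           else 0)"
    (is "_ = (\<Sum>k\<in>?P. ?T k)")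
proof -
  have finP: "finite ?P"
    by (simp add: finite_PiE)
  have "fps_nth (f oo B) p = (\<Sum>K\<in>{0..p}. fps_nth f K * fps_nth (B ^ K) p)"
    by (simp add: fps_compose_nth)
  also have "\<dots> = (\<Sum>K\<in>{0..p}. \<Sum>k\<in>{k \<in> {k\<in>?P. sum k {1..p} \<le> p}. sum k {1..p} = K}. ?T k)"
    by (intro sum.cong refl) (auto simp: fps_nth_power_multinomial[OF B0] sum_distrib_left mult_ac intro!: sum.cong)
  also have "\<dots> = (\<Sum>k\<in>{k\<in>?P. sum k {1..p} \<le> p}. ?T k)"
    by (rule sum.group) (use finP in auto)
  also have "\<dots> = (\<Sum>k\<in>?P. ?T k)"
  proof (rule sum.mono_neutral_left)
    show "\<forall>k\<in>?P - {k \<in> ?P. sum k {1..p} \<le> p}. ?T k = 0"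
    proof
      fix k assume "k \<in> ?P - {k \<in> ?P. sum k {1..p} \<le> p}"
      moreover have "sum k {1..p} \<le> (\<Sum>m\<in>{1..p}. m * k m)"
        by (intro sum_mono) auto
      ultimately show "?T k = 0"
        by auto
    qed
  qed (use finP in auto)
  finally show ?thesis .
qed

lemma cpow_diff_of_nat: "cpow lam (X - of_nat K) = cpow lam X / exp lam ^ K"
  by (simp add: cpow_def left_diff_distrib exp_diff exp_of_nat_mult)

lemma fps_nth_fps_cpow:
  assumes A0: "exp lam = fps_nth A 0"
  shows "fps_nth (fps_cpow lam A X) p =
       (\<Sum>k\<in>PiE {1..p} (\<lambda>_. {0..p}).
          (let K = (\<Sum>m\<in>{1..p}. k m) in
            (X gchoose K) * (of_nat (fact K) / of_nat (\<Prod>m\<in>{1..p}. fact (k m)))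
            * (if p = (\<Sum>m\<in>{1..p}. m * k m) then 1 else 0)
            * cpow lam (X - of_nat K)
            * (\<Prod>m\<in>{1..p}. fps_nth A m ^ k m)))"
proof -
  define a0 where "a0 = fps_nth A 0"
  define B where "B = fps_const (inverse a0) * A - 1"
  have a0: "a0 \<noteq> 0"
    unfolding a0_def by (simp flip: A0)
  have B0: "fps_nth B 0 = 0"
    using a0 by (simp add: B_def a0_def)
  have "fps_nth (fps_cpow lam A X) p = cpow lam X * fps_nth (fps_binomial X oo B) p"
    by (simp add: fps_cpow_def B_def a0_def)
  also have "\<dots> = (\<Sum>k\<in>PiE {1..p} (\<lambda>_. {0..p}). cpow lam X *
           (if (\<Sum>m\<in>{1..p}. m * k m) = p
            then (X gchoose sum k {1..p}) * fact (sum k {1..p}) * (\<Prod>m\<in>{1..p}. fps_nth B m ^ k m / fact (k m))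
            else 0))"
    unfolding fps_nth_compose_multinomial[OF B0] fps_binomial_nth sum_distrib_left ..
  also have "\<dots> = (\<Sum>k\<in>PiE {1..p} (\<lambda>_. {0..p}).
          (let K = (\<Sum>m\<in>{1..p}. k m) in
            (X gchoose K) * (of_nat (fact K) / of_nat (\<Prod>m\<in>{1..p}. fact (k m)))
            * (if p = (\<Sum>m\<in>{1..p}. m * k m) then 1 else 0)
            * cpow lam (X - of_nat K)
            * (\<Prod>m\<in>{1..p}. fps_nth A m ^ k m)))"
    unfolding Let_def
  proof (rule sum.cong[OF refl])
    fix k :: "nat \<Rightarrow> nat"
    define K where "K = sum k {1..p}"
    have "(\<Prod>m\<in>{1..p}. fps_nth B m ^ k m / fact (k m)) =
        (\<Prod>m\<in>{1..p}. fps_nth A m ^ k m * inverse a0 ^ k m / fact (k m))"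
      by (intro prod.cong) (auto simp: B_def power_mult_distrib mult.commute)
    also have "\<dots> = (\<Prod>m\<in>{1..p}. fps_nth A m ^ k m) * inverse a0 ^ K / (\<Prod>m\<in>{1..p}. fact (k m))"
      by (simp add: prod.distrib prod_dividef K_def power_sum)
    finally have prodB: "(\<Prod>m\<in>{1..p}. fps_nth B m ^ k m / fact (k m)) =
        (\<Prod>m\<in>{1..p}. fps_nth A m ^ k m) / (a0 ^ K * (\<Prod>m\<in>{1..p}. fact (k m)))"
      using a0 by (simp add: field_simps power_inverse)
    have cpowK: "cpow lam (X - of_nat K) = cpow lam X / a0 ^ K"
      by (simp add: cpow_diff_of_nat A0 a0_def)
    have "(\<Prod>m\<in>{1..p}. fact (k m) :: complex) \<noteq> 0"
      by simp
    thus "cpow lam X *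
           (if (\<Sum>m\<in>{1..p}. m * k m) = p
            then (X gchoose sum k {1..p}) * fact (sum k {1..p}) * (\<Prod>m\<in>{1..p}. fps_nth B m ^ k m / fact (k m))
            else 0) =
        (X gchoose sum k {1..p}) * (of_nat (fact (sum k {1..p})) / of_nat (\<Prod>m\<in>{1..p}. fact (k m)))
            * (if p = (\<Sum>m\<in>{1..p}. m * k m) then 1 else 0)
            * cpow lam (X - of_nat (sum k {1..p}))
            * (\<Prod>m\<in>{1..p}. fps_nth A m ^ k m)"
      unfolding K_def[symmetric] prodB cpowK using a0 by (simp add: of_nat_prod field_simps)
  qed
  finally show ?thesis .
qed

section \<open>The determinant expression\<close>

lemma fps_nth_compose_eq_sum_lessThan:
  assumes "fps_nth B 0 = 0" and "m < n"
  shows "fps_nth (f oo B) m = (\<Sum>k<n. fps_nth f k * fps_nth (B ^ k) m)"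
  unfolding fps_compose_nth
proof (rule sum.mono_neutral_left)
  show "\<forall>k\<in>{..<n} - {0..m}. fps_nth f k * fps_nth (B ^ k) m = 0"
    using startsby_zero_power_prefix[OF assms(1)] by auto
qed (use assms(2) in auto)

lemma toeplitz_pow_fps_toeplitz:
  assumes A0: "exp lam = fps_nth A 0"
  shows "toeplitz_pow lam (fps_toeplitz n A) Y = fps_toeplitz n (fps_cpow lam A Y)"
proof -
  define B where "B = fps_const (inverse (fps_nth A 0)) * A - 1"
  have B0: "fps_nth B 0 = 0"
    using A0 by (simp add: B_def flip: A0)
  have N: "inverse (cpow lam 1) \<cdot>\<^sub>m fps_toeplitz n A - 1\<^sub>m n = fps_toeplitz n B"
    by (rule eq_matI) (auto simp: B_def cpow_def A0)
  show ?thesis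
    unfolding toeplitz_pow_def Let_def dim_row_fps_toeplitz N fps_toeplitz_power
  proof (rule eq_matI)
    fix i j assume "i < dim_row (fps_toeplitz n (fps_cpow lam A Y))" "j < dim_col (fps_toeplitz n (fps_cpow lam A Y))"
    hence i: "i < n" and j: "j < n"
      by auto
    have "(\<Sum>k<n. (Y gchoose k) * fps_toeplitz n (B ^ k) $$ (i, j)) =
          (if j \<le> i then fps_nth (fps_binomial Y oo B) (i - j) else 0)"
      using i j fps_nth_compose_eq_sum_lessThan[OF B0, of "i - j" n "fps_binomial Y"] by auto
    thus "mat n n (\<lambda>(i, j). cpow lam Y * (\<Sum>k<n. (Y gchoose k) * fps_toeplitz n (B ^ k) $$ (i, j))) $$ (i, j) =
        fps_toeplitz n (fps_cpow lam A Y) $$ (i, j)"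
      using i j by (simp add: fps_cpow_def B_def)
  qed auto
qed

lemma fps_toeplitz_mult_E_mat:
  fixes C :: "complex fps"
  assumes C0: "fps_nth C 0 = cpow lam X"
  shows "fps_toeplitz (Suc p) C * E_mat lam X p =
    mat (Suc p) (Suc p) (\<lambda>(i, j). if j = p then fps_nth C i - (if i = p then 1 else 0) else 0)"
    (is "_ = ?R")
proof (rule eq_matI)
  fix i j assume "i < dim_row ?R" "j < dim_col ?R"
  hence i: "i \<le> p" and j: "j \<le> p"
    by auto
  define t where "t k = fps_toeplitz (Suc p) C $$ (i, k)" for k
  have "(fps_toeplitz (Suc p) C * E_mat lam X p) $$ (i, j) = (\<Sum>k<Suc p. t k * E_mat lam X p $$ (k, j))"
    using i j by (simp add: t_def E_mat_def scalar_prod_def lessThan_atLeast0 del: sum.lessThan_Suc)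
  also have "\<dots> = (\<Sum>k<Suc p. if j = p then (if k = 0 then t k else 0) - (if k = p then t k / cpow lam X else 0) else 0)"
    using j by (intro sum.cong refl) (auto simp: E_mat_def right_diff_distrib)
  also have "\<dots> = (if j = p then t 0 - t p / cpow lam X else 0)"
    by (simp add: sum_subtractf del: sum.lessThan_Suc)
  also have "\<dots> = ?R $$ (i, j)"
    using i j by (auto simp: t_def C0 cpow_def)
  finally show "(fps_toeplitz (Suc p) C * E_mat lam X p) $$ (i, j) = ?R $$ (i, j)" .
qed (auto simp: E_mat_def)

text \<open>Left multiplication by the Toeplitz matrix of \<open>C\<close>, the inverse of that of \<open>D\<close>, turns the
  matrix into the identity with last column \<open>(c\<^sub>0, \<dots>, c\<^sub>p)\<close>.\<close>

lemma det_fps_toeplitz_inverse_plus_E_mat: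
  fixes C D :: "complex fps"
  assumes CD: "C * D = 1" and C0: "fps_nth C 0 = cpow lam X"
  shows "cpow lam X ^ Suc p * det (fps_toeplitz (Suc p) D + E_mat lam X p) = fps_nth C p"
proof -
  define n where "n = Suc p"
  define R where "R = mat n n (\<lambda>(i, j). if j = p then fps_nth C i else if i = j then 1 else 0)"
  have E: "E_mat lam X p \<in> carrier_mat n n"
    by (simp add: E_mat_def n_def)
  have "fps_toeplitz n C * (fps_toeplitz n D + E_mat lam X p) = 1\<^sub>m n + fps_toeplitz n C * E_mat lam X p"
    by (simp add: mult_add_distrib_mat[OF fps_toeplitz_carrier fps_toeplitz_carrier E]
        fps_toeplitz_mult CD fps_toeplitz_one)
  also have "\<dots> = R"
    unfolding n_def fps_toeplitz_mult_E_mat[OF C0] by (rule eq_matI) (auto simp: R_def n_def)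
  finally have TR: "fps_toeplitz n C * (fps_toeplitz n D + E_mat lam X p) = R" .
  have "upper_triangular R"
    by (auto simp: upper_triangular_def R_def n_def)
  hence "det R = (\<Prod>i = 0..<n. R $$ (i, i))"
    using det_upper_triangular[of R n] by (simp add: prod_list_diag_prod R_def)
  also have "\<dots> = fps_nth C p"
    by (simp add: n_def R_def)
  finally have "det R = fps_nth C p" .
  moreover have "det (fps_toeplitz n C * (fps_toeplitz n D + E_mat lam X p)) =
      cpow lam X ^ n * det (fps_toeplitz n D + E_mat lam X p)"
    using E by (simp add: det_mult[of _ n] det_fps_toeplitz C0)
  ultimately show ?thesis
    using TR by (simp add: n_def)
qed

theorem theorem1:
  fixes F L :: "complex \<Rightarrow> complex" and r :: real and X lam :: complex
  assumes "r > 0"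
    and "F holomorphic_on ball 0 r"
    and "F 0 \<noteq> 0"
    and "exp lam = F 0"
    and "L holomorphic_on ball 0 r"
    and "\<And>z. z \<in> ball 0 r \<Longrightarrow> exp (L z) = F z"
    and "L 0 = lam"
  shows "\<forall>p::nat.
     taylor_coeff (\<lambda>z. exp (X * L z)) p =
       (\<Sum>k\<in>PiE {1..p} (\<lambda>_. {0..p}).
          (let K = (\<Sum>m\<in>{1..p}. k m) in
            (X gchoose K) * (of_nat (fact K) / of_nat (\<Prod>m\<in>{1..p}. fact (k m)))
            * (if p = (\<Sum>m\<in>{1..p}. m * k m) then 1 else 0)
            * cpow lam (X - of_nat K)
            * (\<Prod>m\<in>{1..p}. taylor_coeff F m ^ k m)))
     \<and> taylor_coeff (\<lambda>z. exp (X * L z)) p =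
       (cpow lam X) ^ (p + 1) *
         det (toeplitz_pow lam (toeplitz_lt (taylor_coeff F) p) (- X) + E_mat lam X p)"
proof -
  define A where "A = fps_expansion F 0"
  have S: "open (ball 0 r)" "0 \<in> ball 0 r"
    using \<open>r > 0\<close> by auto
  have A0: "exp lam = fps_nth A 0"
    using assms(4) by (simp add: A_def fps_expansion_def)
  have "(\<lambda>z. exp (X * L z)) has_fps_expansion fps_cpow lam A X"
    using has_fps_expansion_exp_mult_log[OF S assms(2,5,6)] by (simp add: A_def assms(7))
  hence coeff: "taylor_coeff (\<lambda>z. exp (X * L z)) p = fps_nth (fps_cpow lam A X) p" for p
    by (simp add: taylor_coeff_def fps_nth_fps_expansion)
  have coeffF: "taylor_coeff F = fps_nth A"
    by (simp add: fun_eq_iff taylor_coeff_def A_def fps_expansion_def)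
  have inverse: "fps_cpow lam A X * fps_cpow lam A (- X) = 1"
    by (simp add: fps_cpow_add flip: A0)
  show ?thesis
  proof (intro allI conjI)
    fix p
    show "taylor_coeff (\<lambda>z. exp (X * L z)) p =
       (\<Sum>k\<in>PiE {1..p} (\<lambda>_. {0..p}).
          (let K = (\<Sum>m\<in>{1..p}. k m) in
            (X gchoose K) * (of_nat (fact K) / of_nat (\<Prod>m\<in>{1..p}. fact (k m)))
            * (if p = (\<Sum>m\<in>{1..p}. m * k m) then 1 else 0)
            * cpow lam (X - of_nat K)
            * (\<Prod>m\<in>{1..p}. taylor_coeff F m ^ k m)))"
      unfolding coeff coeffF by (rule fps_nth_fps_cpow[OF A0])
    show "taylor_coeff (\<lambda>z. exp (X * L z)) p =
       (cpow lam X) ^ (p + 1) *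
         det (toeplitz_pow lam (toeplitz_lt (taylor_coeff F) p) (- X) + E_mat lam X p)"
      using det_fps_toeplitz_inverse_plus_E_mat[OF inverse fps_nth_fps_cpow_0, where p = p]
      by (simp add: coeff coeffF toeplitz_lt_eq_fps_toeplitz fps_nth_inverse toeplitz_pow_fps_toeplitz[OF A0])
  qed
qed

end
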